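(* Let $d\ge2$ and $\overrightarrow{w}\in(0,\infty)^d$ with $w_1=\max\{w_1,\dots,w_d\}$ and $2w_1>\sum_{i=1}^dw_i$. Then for every random vector $\overrightarrow{U}=(U_1,\dots,U_d)$ with uniform$[0,1]$ marginals, $$l(\overrightarrow{w})\le\mathrm{Var}\left(\sum_{i=1}^dw_iU_i\right),$$ with equality if and only if $\overrightarrow{U}$ is $\overrightarrow{w^*}$-CM. Moreover, there exists such a $\overrightarrow{U}$ attaining equality.
   Context: A random vector $\overrightarrow{U}=(U_1,\dots,U_d)$ with each $U_i$ uniform on $[0,1]$ is $\overrightarrow{v}$-CM (for $\overrightarrow{v}\in(0,\infty)^d$) if $P\left(\sum_{i=1}^d v_iU_i=\frac12\sum_{i=1}^d v_i\right)=1$. For $\overrightarrow{w}\in(0,\infty)^d$, define $\overrightarrow{w^*}=(w_1^*,\dots,w_d^* )$ by $w_i^*=w_i$ if $2w_i\le\sum_{j=1}^dw_j$ and $w_i^*=\sum_{j=1}^dw_j-w_i$ if $2w_i>\sum_{j=1}^dw_j$; and define $l(\overrightarrow{w})=\frac1{12}\left[\left(2\max\{w_1,\dots,w_d\}-\sum_{i=1}^dw_i\right)_+\right]^2$, where $x_+=\max\{x,0\}$. *)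

theory Defs
  imports "HOL-Probability.Probability"
begin

text \<open>Vectors in (0,oo)^d are represented as functions nat => real, components
  indexed 0..d-1 (so w_1 of the paper is w 0).\<close>

definition unif01 :: "'a measure \<Rightarrow> ('a \<Rightarrow> real) \<Rightarrow> bool" where
  "unif01 M X \<longleftrightarrow> X \<in> borel_measurable M \<and>
     distr M borel X = uniform_measure lborel {0..1}"

definition is_CM :: "'a measure \<Rightarrow> nat \<Rightarrow> (nat \<Rightarrow> real) \<Rightarrow> (nat \<Rightarrow> 'a \<Rightarrow> real) \<Rightarrow> bool" where
  "is_CM M d v U \<longleftrightarrow>
     measure M {x \<in> space M. (\<Sum>i<d. v i * U i x) = (1/2) * (\<Sum>i<d. v i)} = 1"

definition wstar :: "nat \<Rightarrow> (nat \<Rightarrow> real) \<Rightarrow> nat \<Rightarrow> real" where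
  "wstar d w i = (if 2 * w i \<le> (\<Sum>j<d. w j) then w i else (\<Sum>j<d. w j) - w i)"

definition l_fun :: "nat \<Rightarrow> (nat \<Rightarrow> real) \<Rightarrow> real" where
  "l_fun d w = (1/12) * (max (2 * Max (w ` {..<d}) - (\<Sum>i<d. w i)) 0)^2"

end

theory Submission
  imports Defs
begin

text \<open>
  With
  \<open>tail = w 1 + \<dots> + w (d - 1) < w 0\<close> the CM weights are \<open>w* = (tail, w 1, \<dots>, w (d - 1))\<close>;
  put \<open>S = \<Sum>\<^sub>i w* i \<cdot> U i\<close>, so that \<open>\<Sum>\<^sub>i w i \<cdot> U i = (w 0 - tail) \<cdot> U 0 + S\<close> and
  \<open>Var (\<Sum>\<^sub>i w i \<cdot> U i) = (w 0 - tail)\<^sup>2/12 + Var S + 2 (w 0 - tail) Cov (U 0, S)\<close>.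
  For uniform marginals \<open>0 \<le> Var (U 0 + U i) = 1/6 + 2 Cov (U 0, U i)\<close>, so
  \<open>Cov (U 0, S) \<ge> tail/12 - tail/12 = 0\<close>. Hence the variance is at least
  \<open>(w 0 - tail)\<^sup>2/12 = l(w)\<close>, with equality iff \<open>Var S = 0\<close>, i.e. iff \<open>U\<close> is \<open>w*\<close>-CM
  (a constant \<open>S\<close> also kills the covariance term). The choice \<open>U 0 = V\<close>, \<open>U i = 1 - V\<close>
  makes \<open>S\<close> constant.
\<close>

definition (in prob_space) covariance :: "('a \<Rightarrow> real) \<Rightarrow> ('a \<Rightarrow> real) \<Rightarrow> real" where
  "covariance X Y = expectation (\<lambda>x. (X x - expectation X) * (Y x - expectation Y))"

lemma (in finite_measure) integrable_mult_of_square_integrable: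
  fixes X Y :: "'a \<Rightarrow> real"
  assumes [measurable]: "X \<in> borel_measurable M" "Y \<in> borel_measurable M"
    and "integrable M (\<lambda>x. (X x)\<^sup>2)" "integrable M (\<lambda>x. (Y x)\<^sup>2)"
  shows "integrable M (\<lambda>x. X x * Y x)"
proof (rule Bochner_Integration.integrable_bound)
  show "integrable M (\<lambda>x. (X x)\<^sup>2 + (Y x)\<^sup>2)" using assms by simp
  have "\<bar>a * b\<bar> \<le> a\<^sup>2 + b\<^sup>2" for a b :: real
    using sum_squares_bound[of "\<bar>a\<bar>" "\<bar>b\<bar>"] abs_ge_zero[of "a * b"]
    by (simp only: abs_mult power2_abs)
  then show "AE x in M. norm (X x * Y x) \<le> norm ((X x)\<^sup>2 + (Y x)\<^sup>2)" by simp
qed simp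

lemma (in finite_measure) integrable_square_sum:
  fixes X :: "'i \<Rightarrow> 'a \<Rightarrow> real"
  assumes "finite A" "\<And>i. i \<in> A \<Longrightarrow> X i \<in> borel_measurable M"
    and "\<And>i. i \<in> A \<Longrightarrow> integrable M (\<lambda>x. (X i x)\<^sup>2)"
  shows "integrable M (\<lambda>x. (\<Sum>i\<in>A. c i * X i x)\<^sup>2)"
proof -
  have "(\<lambda>x. (\<Sum>i\<in>A. c i * X i x)\<^sup>2) =
      (\<lambda>x. \<Sum>i\<in>A. \<Sum>j\<in>A. c i * c j * (X i x * X j x))"
    by (simp add: power2_eq_square sum_product algebra_simps)
  then show ?thesis
    using assms by (simp add: integrable_mult_of_square_integrable)
qed

lemma (in prob_space) covariance_eq:
  fixes X Y :: "'a \<Rightarrow> real"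
  assumes "integrable M X" "integrable M Y" "integrable M (\<lambda>x. X x * Y x)"
  shows "covariance X Y = expectation (\<lambda>x. X x * Y x) - expectation X * expectation Y"
  unfolding covariance_def using assms by (simp add: algebra_simps prob_space)

lemma (in prob_space) covariance_self: "covariance X X = variance X"
  unfolding covariance_def by (simp add: power2_eq_square)

lemma (in prob_space) covariance_sum_right:
  fixes X :: "'a \<Rightarrow> real" and Y :: "'i \<Rightarrow> 'a \<Rightarrow> real"
  assumes A: "finite A" and X: "integrable M X"
    and Y: "\<And>i. i \<in> A \<Longrightarrow> integrable M (Y i)"
    and XY: "\<And>i. i \<in> A \<Longrightarrow> integrable M (\<lambda>x. X x * Y i x)"
  shows "covariance X (\<lambda>x. \<Sum>i\<in>A. c i * Y i x) = (\<Sum>i\<in>A. c i * covariance X (Y i))"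
proof -
  have XS: "(\<lambda>x. X x * (\<Sum>i\<in>A. c i * Y i x)) = (\<lambda>x. \<Sum>i\<in>A. c i * (X x * Y i x))"
    by (simp add: sum_distrib_left mult.left_commute)
  have "covariance X (\<lambda>x. \<Sum>i\<in>A. c i * Y i x) =
      expectation (\<lambda>x. X x * (\<Sum>i\<in>A. c i * Y i x))
      - expectation X * expectation (\<lambda>x. \<Sum>i\<in>A. c i * Y i x)"
    by (rule covariance_eq) (use X Y XY in \<open>simp_all add: XS\<close>)
  also have "\<dots> = (\<Sum>i\<in>A. c i * expectation (\<lambda>x. X x * Y i x))
      - expectation X * (\<Sum>i\<in>A. c i * expectation (Y i))"
    unfolding XS using Y XY by (simp add: Bochner_Integration.integral_sum)
  also have "\<dots> = (\<Sum>i\<in>A. c i * (expectation (\<lambda>x. X x * Y i x) - expectation X * expectation (Y i)))"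
    unfolding right_diff_distrib sum_subtractf sum_distrib_left by (simp add: mult.left_commute)
  also have "\<dots> = (\<Sum>i\<in>A. c i * covariance X (Y i))"
  proof (rule sum.cong[OF refl])
    fix i assume "i \<in> A"
    then show "c i * (expectation (\<lambda>x. X x * Y i x) - expectation X * expectation (Y i)) =
        c i * covariance X (Y i)"
      using covariance_eq[OF X Y XY] by simp
  qed
  finally show ?thesis .
qed

lemma (in prob_space) covariance_AE_const_right:
  fixes X Y :: "'a \<Rightarrow> real"
  assumes [measurable]: "Y \<in> borel_measurable M" and const: "AE x in M. Y x = c"
  shows "covariance X Y = 0"
proof -
  have "expectation Y = c"
    using integral_cong_AE[of Y M "\<lambda>_. c"] const by (simp add: prob_space)
  then show ?thesis
    unfolding covariance_def using const by (intro integral_eq_zero_AE) auto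
qed

lemma (in prob_space) variance_scaled_add:
  fixes X Y :: "'a \<Rightarrow> real"
  assumes [measurable]: "X \<in> borel_measurable M" "Y \<in> borel_measurable M"
    and X2: "integrable M (\<lambda>x. (X x)\<^sup>2)" and Y2: "integrable M (\<lambda>x. (Y x)\<^sup>2)"
  shows "variance (\<lambda>x. k * X x + Y x) = k\<^sup>2 * variance X + variance Y + 2 * k * covariance X Y"
proof -
  have [simp]: "integrable M X" "integrable M Y"
    using X2 Y2 by (auto intro: square_integrable_imp_integrable)
  have [simp]: "integrable M (\<lambda>x. X x * Y x)"
    using X2 Y2 by (intro integrable_mult_of_square_integrable) auto
  have sq: "(\<lambda>x. (k * X x + Y x)\<^sup>2) = (\<lambda>x. k\<^sup>2 * (X x)\<^sup>2 + (Y x)\<^sup>2 + 2 * k * (X x * Y x))"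
    by (simp add: power2_eq_square algebra_simps)
  have "variance (\<lambda>x. k * X x + Y x) =
      expectation (\<lambda>x. (k * X x + Y x)\<^sup>2) - (expectation (\<lambda>x. k * X x + Y x))\<^sup>2"
    by (rule variance_eq) (use X2 Y2 in \<open>simp_all add: sq\<close>)
  also have "\<dots> = k\<^sup>2 * (expectation (\<lambda>x. (X x)\<^sup>2) - (expectation X)\<^sup>2)
      + (expectation (\<lambda>x. (Y x)\<^sup>2) - (expectation Y)\<^sup>2)
      + 2 * k * (expectation (\<lambda>x. X x * Y x) - expectation X * expectation Y)"
    unfolding sq using X2 Y2 by simp (simp add: power2_sum power_mult_distrib algebra_simps)
  finally show ?thesis
    using X2 Y2 by (simp add: variance_eq covariance_eq)
qed

lemma (in prob_space) variance_eq_0_iff: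
  fixes X :: "'a \<Rightarrow> real"
  assumes [measurable]: "X \<in> borel_measurable M" and X2: "integrable M (\<lambda>x. (X x)\<^sup>2)"
  shows "variance X = 0 \<longleftrightarrow> (AE x in M. X x = expectation X)"
proof -
  have "integrable M X" using X2 by (rule square_integrable_imp_integrable[rotated]) simp
  then have "integrable M (\<lambda>x. (X x - expectation X)\<^sup>2)"
    using X2 by (simp add: power2_diff)
  then show ?thesis by (simp add: integral_nonneg_eq_0_iff_AE)
qed

context prob_space
begin

lemma unif01_distributed:
  assumes "unif01 M X"
  shows "distributed M lborel X (\<lambda>x. ennreal (indicator {0..1::real} x / measure lborel {0..1::real}))"
proof -
  have [measurable]: "X \<in> borel_measurable M" using assms unfolding unif01_def by blast
  have "distr M lborel X = distr M borel X" by (rule distr_cong) auto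
  also have "\<dots> = uniform_measure lborel {0..1}" using assms unfolding unif01_def by blast
  also have "\<dots> = density lborel (\<lambda>x. ennreal (indicator {0..1::real} x / measure lborel {0..1::real}))"
    unfolding uniform_measure_def by (intro density_cong) (auto split: split_indicator)
  finally show ?thesis unfolding distributed_def by auto
qed

lemma unif01I:
  assumes [measurable]: "X \<in> borel_measurable M"
    and cdf: "\<And>t. 0 \<le> t \<Longrightarrow> t \<le> 1 \<Longrightarrow> \<P>(x in M. X x \<le> t) = t"
  shows "unif01 M X"
proof -
  have "distributed M lborel X (\<lambda>x. indicator {0..1::real} x / measure lborel {0..1::real})"
    by (rule uniform_distrI_borel_atLeastAtMost) (use cdf in auto)
  then have "distr M lborel X =
      density lborel (\<lambda>x. ennreal (indicator {0..1::real} x / measure lborel {0..1::real}))"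
    unfolding distributed_def by blast
  also have "\<dots> = uniform_measure lborel {0..1}"
    unfolding uniform_measure_def by (intro density_cong) (auto split: split_indicator)
  also have "distr M lborel X = distr M borel X" by (rule distr_cong) auto
  finally show ?thesis unfolding unif01_def by simp
qed

lemma unif01_measurable: "unif01 M X \<Longrightarrow> X \<in> borel_measurable M"
  unfolding unif01_def by blast

lemma unif01_AE_bounds:
  assumes "unif01 M X"
  shows "AE x in M. 0 \<le> X x \<and> X x \<le> 1"
proof -
  have distr: "distr M borel X = uniform_measure lborel {0..1}"
    using assms unfolding unif01_def by blast
  have "AE x in distr M borel X. x \<in> {0..1}"
    unfolding distr by (intro AE_uniform_measureI) auto
  then show ?thesis
    using unif01_measurable[OF assms] by (subst (asm) AE_distr_iff) auto
qed

lemma unif01_square_integrable: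
  assumes "unif01 M X"
  shows "integrable M (\<lambda>x. (X x)\<^sup>2)"
proof (rule integrable_const_bound[where B=1])
  show "AE x in M. norm ((X x)\<^sup>2) \<le> 1"
    using unif01_AE_bounds[OF assms] by eventually_elim (simp add: abs_square_le_1)
qed (use unif01_measurable[OF assms] in simp)

lemma unif01_integrable: "unif01 M X \<Longrightarrow> integrable M X"
  by (rule square_integrable_imp_integrable[OF unif01_measurable unif01_square_integrable])

lemma unif01_expectation: "unif01 M X \<Longrightarrow> expectation X = 1/2"
  using uniform_distributed_expectation[OF unif01_distributed] by simp

lemma unif01_variance: "unif01 M X \<Longrightarrow> variance X = 1/12"
  using uniform_distributed_variance[OF unif01_distributed] by simp

lemma covariance_unif01_ge:
  assumes "unif01 M X" "unif01 M Y"
  shows "- 1/12 \<le> covariance X Y"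
proof -
  have "0 \<le> variance (\<lambda>x. 1 * X x + Y x)" by (rule variance_positive)
  also have "\<dots> = 1/6 + 2 * covariance X Y"
    using assms by (subst variance_scaled_add)
      (simp_all add: unif01_measurable unif01_square_integrable unif01_variance)
  finally show ?thesis by simp
qed

lemma covariance_unif01_sum_nonneg:
  fixes U :: "'i \<Rightarrow> 'a \<Rightarrow> real"
  assumes A: "finite A" "k \<in> A" and U: "\<And>i. i \<in> A \<Longrightarrow> unif01 M (U i)"
    and c: "\<And>i. i \<in> A \<Longrightarrow> 0 \<le> c i" "(\<Sum>i\<in>A - {k}. c i) \<le> c k"
  shows "0 \<le> covariance (U k) (\<lambda>x. \<Sum>i\<in>A. c i * U i x)"
proof -
  have Uk: "unif01 M (U k)" using U A by blast
  have "covariance (U k) (\<lambda>x. \<Sum>i\<in>A. c i * U i x) = (\<Sum>i\<in>A. c i * covariance (U k) (U i))"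
    using A U Uk
    by (intro covariance_sum_right)
       (auto intro: unif01_integrable integrable_mult_of_square_integrable
             unif01_measurable unif01_square_integrable)
  also have "\<dots> = c k / 12 + (\<Sum>i\<in>A - {k}. c i * covariance (U k) (U i))"
    using A Uk by (simp add: sum.remove covariance_self unif01_variance)
  finally have cov: "covariance (U k) (\<lambda>x. \<Sum>i\<in>A. c i * U i x)
      = c k / 12 + (\<Sum>i\<in>A - {k}. c i * covariance (U k) (U i))" .
  have "- (\<Sum>i\<in>A - {k}. c i) / 12 = (\<Sum>i\<in>A - {k}. c i * (- 1/12))"
    by (simp add: sum_distrib_right sum_negf)
  also have "\<dots> \<le> (\<Sum>i\<in>A - {k}. c i * covariance (U k) (U i))"
    using U Uk c by (intro sum_mono mult_left_mono covariance_unif01_ge) auto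
  finally show ?thesis using cov c(2) by linarith
qed

end

lemma unif01_uniform_measure_ident: "unif01 (uniform_measure lborel {0..1::real}) (\<lambda>x. x)"
  unfolding unif01_def by (simp add: distr_id2 measurable_ident_sets)

lemma unif01_uniform_measure_reflect: "unif01 (uniform_measure lborel {0..1::real}) (\<lambda>x. 1 - x)"
proof (rule prob_space.unif01I)
  show "prob_space (uniform_measure lborel {0..1::real})"
    by (rule prob_space_uniform_measure) auto
  fix t :: real assume "0 \<le> t" "t \<le> 1"
  moreover have "{x \<in> space (uniform_measure lborel {0..1}). 1 - x \<le> t} = {1 - t..}" by auto
  moreover have "{1 - t..} \<inter> {0..1} = {1 - t..1::real}" using \<open>t \<le> 1\<close> by auto
  ultimately show "\<P>(x in uniform_measure lborel {0..1}. 1 - x \<le> t) = t"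
    by (simp add: measure_uniform_measure)
qed measurable

locale dominant_weights =
  fixes d :: nat and w :: "nat \<Rightarrow> real"
  assumes two_le_d: "d \<ge> 2"
    and weights_pos: "\<forall>i<d. w i > 0"
    and weight_0_max: "\<forall>i<d. w i \<le> w 0"
    and weight_0_dominant: "2 * w 0 > (\<Sum>i<d. w i)"
begin

definition tail :: real where "tail = (\<Sum>i\<in>{1..<d}. w i)"

lemma sum_lessThan_split_0: "(\<Sum>i<d. f i) = f 0 + (\<Sum>i\<in>{1..<d}. f i)"
  using two_le_d by (simp add: atLeast0LessThan[symmetric] sum.atLeast_Suc_lessThan)

lemma tail_nonneg: "0 \<le> tail"
  unfolding tail_def using weights_pos by (intro sum_nonneg) (auto intro: less_imp_le)

lemma tail_less_weight_0: "tail < w 0"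
  using weight_0_dominant sum_lessThan_split_0[of w] unfolding tail_def by simp

lemma l_fun_eq: "l_fun d w = (w 0 - tail)\<^sup>2 / 12"
proof -
  have "Max (w ` {..<d}) = w 0" using weight_0_max two_le_d by (intro Max_eqI) auto
  then show ?thesis
    using sum_lessThan_split_0[of w] tail_less_weight_0 unfolding l_fun_def tail_def[symmetric]
    by (simp add: max_def)
qed

lemma wstar_0: "wstar d w 0 = tail"
  using sum_lessThan_split_0[of w] tail_less_weight_0 unfolding wstar_def tail_def[symmetric] by simp

lemma wstar_tail:
  assumes "i \<in> {1..<d}"
  shows "wstar d w i = w i"
proof -
  have "w i \<le> tail" unfolding tail_def using assms weights_pos by (intro member_le_sum) auto
  moreover have "w i \<le> w 0" using weight_0_max assms by auto
  ultimately show ?thesis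
    using sum_lessThan_split_0[of w] unfolding wstar_def tail_def[symmetric] by simp
qed

lemma wstar_nonneg: "i < d \<Longrightarrow> 0 \<le> wstar d w i"
  using weights_pos tail_nonneg by (cases "i = 0") (auto simp: wstar_0 wstar_tail less_imp_le)

lemma sum_wstar_tail: "(\<Sum>i\<in>{1..<d}. wstar d w i) = wstar d w 0"
  unfolding wstar_0 tail_def by (intro sum.cong refl) (simp add: wstar_tail)

lemma sum_wstar_mult: "(\<Sum>i<d. wstar d w i * f i) = tail * f 0 + (\<Sum>i\<in>{1..<d}. w i * f i)"
proof -
  have "(\<Sum>i\<in>{1..<d}. wstar d w i * f i) = (\<Sum>i\<in>{1..<d}. w i * f i)"
    by (intro sum.cong refl) (simp add: wstar_tail)
  then show ?thesis by (simp add: sum_lessThan_split_0 wstar_0)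
qed

lemma variance_ge_l_fun:
  fixes M :: "'a measure" and U :: "nat \<Rightarrow> 'a \<Rightarrow> real"
  assumes "prob_space M" and unif: "\<forall>i<d. unif01 M (U i)"
  shows "l_fun d w \<le> prob_space.variance M (\<lambda>x. \<Sum>i<d. w i * U i x) \<and>
    (l_fun d w = prob_space.variance M (\<lambda>x. \<Sum>i<d. w i * U i x) \<longleftrightarrow> is_CM M d (wstar d w) U)"
proof -
  interpret prob_space M by fact
  define S where "S x = (\<Sum>i<d. wstar d w i * U i x)" for x
  have U0: "unif01 M (U 0)" using unif two_le_d by simp
  have [measurable]: "S \<in> borel_measurable M"
    unfolding S_def using unif
    by (intro borel_measurable_sum borel_measurable_times borel_measurable_const)
       (auto dest: unif01_measurable)
  have S2: "integrable M (\<lambda>x. (S x)\<^sup>2)"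
    unfolding S_def using unif
    by (intro integrable_square_sum) (auto dest: unif01_measurable unif01_square_integrable)
  have ES: "expectation S = (1/2) * (\<Sum>i<d. wstar d w i)"
    unfolding S_def using unif
    by (simp add: Bochner_Integration.integral_sum unif01_integrable unif01_expectation sum_distrib_left)
  have Z: "(\<Sum>i<d. w i * U i x) = (w 0 - tail) * U 0 x + S x" for x
    unfolding S_def sum_wstar_mult by (simp add: sum_lessThan_split_0 algebra_simps)
  have var: "variance (\<lambda>x. \<Sum>i<d. w i * U i x)
      = l_fun d w + variance S + 2 * (w 0 - tail) * covariance (U 0) S"
    unfolding Z using U0 S2
    by (subst variance_scaled_add)
       (simp_all add: unif01_measurable unif01_square_integrable unif01_variance l_fun_eq)
  have cov: "0 \<le> covariance (U 0) S"
  proof -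
    have "{..<d} - {0} = {1..<d}" by auto
    then show ?thesis
      unfolding S_def using unif two_le_d sum_wstar_tail
      by (intro covariance_unif01_sum_nonneg) (auto simp: wstar_nonneg)
  qed
  have "is_CM M d (wstar d w) U \<longleftrightarrow> (AE x in M. S x = expectation S)"
    unfolding is_CM_def ES S_def[symmetric] by (rule prob_Collect_eq_1) measurable
  also have "\<dots> \<longleftrightarrow> variance S = 0"
    using S2 by (simp add: variance_eq_0_iff)
  finally have CM: "is_CM M d (wstar d w) U \<longleftrightarrow> variance S = 0" .
  have "variance S = 0 \<Longrightarrow> covariance (U 0) S = 0"
    using S2 by (auto simp: variance_eq_0_iff intro: covariance_AE_const_right)
  then show ?thesis
    unfolding var CM using variance_positive[of S] cov tail_less_weight_0
    by (auto simp: add_nonneg_eq_0_iff)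
qed

lemma exists_variance_eq_l_fun:
  "\<exists>(M :: real measure) (U :: nat \<Rightarrow> real \<Rightarrow> real).
    prob_space M \<and> (\<forall>i<d. unif01 M (U i)) \<and>
    l_fun d w = prob_space.variance M (\<lambda>x. \<Sum>i<d. w i * U i x)"
proof -
  define M where "M = uniform_measure lborel {0..1::real}"
  define U :: "nat \<Rightarrow> real \<Rightarrow> real" where "U i x = (if i = 0 then x else 1 - x)" for i x
  have P: "prob_space M" unfolding M_def by (rule prob_space_uniform_measure) auto
  have unif: "\<forall>i<d. unif01 M (U i)"
  proof (intro allI impI)
    fix i show "unif01 M (U i)"
      using unif01_uniform_measure_ident unif01_uniform_measure_reflect
      by (cases "i = 0") (simp_all add: M_def U_def[abs_def])
  qed
  have "(\<Sum>i<d. wstar d w i * U i x) = tail" for x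
  proof -
    have "(\<Sum>i\<in>{1..<d}. w i * U i x) = (\<Sum>i\<in>{1..<d}. w i) * (1 - x)"
      unfolding sum_distrib_right by (intro sum.cong refl) (simp add: U_def)
    then show ?thesis
      unfolding sum_wstar_mult tail_def[symmetric] by (simp add: U_def algebra_simps)
  qed
  moreover have "(1/2) * (\<Sum>i<d. wstar d w i) = tail"
    using sum_wstar_mult[of "\<lambda>_. 1"] by (simp add: tail_def)
  ultimately have
    "{x \<in> space M. (\<Sum>i<d. wstar d w i * U i x) = (1/2) * (\<Sum>i<d. wstar d w i)} = space M"
    by simp
  then have "is_CM M d (wstar d w) U"
    unfolding is_CM_def using prob_space.prob_space[OF P] by simp
  then show ?thesis using variance_ge_l_fun[OF P unif] P unif by blast
qed

end

theorem mainTheorem10: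
  fixes d :: nat and w :: "nat \<Rightarrow> real"
  assumes "d \<ge> 2"
    and "\<forall>i<d. w i > 0"
    and "\<forall>i<d. w i \<le> w 0"
    and "2 * w 0 > (\<Sum>i<d. w i)"
  shows "(\<forall>(M :: 'a measure) (U :: nat \<Rightarrow> 'a \<Rightarrow> real).
            prob_space M \<and> (\<forall>i<d. unif01 M (U i)) \<longrightarrow>
              l_fun d w \<le> prob_space.variance M (\<lambda>x. \<Sum>i<d. w i * U i x) \<and>
              (l_fun d w = prob_space.variance M (\<lambda>x. \<Sum>i<d. w i * U i x)
                 \<longleftrightarrow> is_CM M d (wstar d w) U))
       \<and> (\<exists>(M :: real measure) (U :: nat \<Rightarrow> real \<Rightarrow> real).
            prob_space M \<and> (\<forall>i<d. unif01 M (U i)) \<and>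
            l_fun d w = prob_space.variance M (\<lambda>x. \<Sum>i<d. w i * U i x))"
proof -
  interpret dominant_weights d w
    using assms by unfold_locales
  show ?thesis
    using variance_ge_l_fun exists_variance_eq_l_fun by blast
qed

end
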